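(* Let $R\subset S$ be an $M$-crucial ring extension such that the natural map $R(X)\otimes_RS\to S(X)$ is an isomorphism (for example, if $R\subset S$ is integral or a flat epimorphism). Then $R(X)\subset S(X)$ is $MR(X)$-crucial.
   Context: Rings are commutative and unital. For a ring $A$, its Nagata ring $A(X)$ is the localization of the polynomial ring $A[X]$ at the multiplicative set of polynomials whose content (ideal generated by the coefficients) is $A$. A ring extension $A\subset B$ is $N$-crucial if $\mathrm{Supp}_A(B/A)=\{P\in\mathrm{Spec}(A)\mid A_P\neq B_P\}=\{N\}$ (then $N$ is maximal). *)

theory Defs
  imports "HOL-Computational_Algebra.Polynomial"
begin

definition subring_of :: "'a::{comm_ring,monoid_mult} set \<Rightarrow> bool" where
  "subring_of A \<longleftrightarrow> 0 \<in> A \<and> 1 \<in> A \<and> (\<forall>x\<in>A. \<forall>y\<in>A. x + y \<in> A \<and> x * y \<in> A \<and> - x \<in> A)"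

definition ideal_in :: "'a::comm_ring set \<Rightarrow> 'a set \<Rightarrow> bool" where
  "ideal_in A I \<longleftrightarrow> I \<subseteq> A \<and> 0 \<in> I \<and> (\<forall>x\<in>I. \<forall>y\<in>I. x + y \<in> I \<and> - x \<in> I)
     \<and> (\<forall>a\<in>A. \<forall>x\<in>I. a * x \<in> I)"

definition prime_ideal_in :: "'a::comm_ring set \<Rightarrow> 'a set \<Rightarrow> bool" where
  "prime_ideal_in A P \<longleftrightarrow> ideal_in A P \<and> P \<noteq> A \<and> (\<forall>a\<in>A. \<forall>b\<in>A. a * b \<in> P \<longrightarrow> a \<in> P \<or> b \<in> P)"

definition gen_ideal_in :: "'a::comm_ring set \<Rightarrow> 'a set \<Rightarrow> 'a set" where
  "gen_ideal_in A X = \<Inter>{I. ideal_in A I \<and> X \<subseteq> I}"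

text \<open>Support of the A-module B/A for a subring A of the ring B = UNIV:
  the primes P of A with (B/A)_P \<noteq> 0, i.e. with some class b + A whose image in
  (B/A)_P is nonzero, i.e. not killed by any s \<in> A - P.\<close>
definition supp_ext :: "'a::comm_ring set \<Rightarrow> 'a set set" where
  "supp_ext A = {P. prime_ideal_in A P \<and> (\<exists>b. \<forall>s\<in>A - P. s * b \<notin> A)}"

definition crucial :: "'a::comm_ring set \<Rightarrow> 'a set \<Rightarrow> bool" where
  "crucial A N \<longleftrightarrow> supp_ext A = {N}"

text \<open>The content of g (ideal of A generated by the coefficients of g) equals A.\<close>
definition content_unit_in :: "'a::comm_ring_1 set \<Rightarrow> 'a poly \<Rightarrow> bool" where
  "content_unit_in A g \<longleftrightarrow> (\<forall>i. coeff g i \<in> A) \<and>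
     (\<exists>a. (\<forall>i. a i \<in> A) \<and> (\<Sum>i\<le>degree g. a i * coeff g i) = 1)"

section \<open>The Nagata ring S(X) of a ring S (the type 'a)\<close>

text \<open>Multiplicative monoid generated by the content-one polynomials (it coincides with
  the set of content-one polynomials, which is multiplicatively closed).\<close>
inductive_set nag_den :: "'a::comm_ring_1 poly set" where
  one: "1 \<in> nag_den"
| mult: "content_unit_in UNIV g \<Longrightarrow> h \<in> nag_den \<Longrightarrow> g * h \<in> nag_den"

lemma nag_den_mult: "g \<in> nag_den \<Longrightarrow> h \<in> nag_den \<Longrightarrow> g * h \<in> nag_den"
  by (induction g rule: nag_den.induct) (auto simp: mult.assoc intro: nag_den.mult)

definition nag_rel :: "('a::comm_ring_1 poly \<times> 'a poly) \<Rightarrow> ('a poly \<times> 'a poly) \<Rightarrow> bool" where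
  "nag_rel p q \<longleftrightarrow> snd p \<in> nag_den \<and> snd q \<in> nag_den \<and>
     (\<exists>h\<in>nag_den. h * (fst p * snd q - fst q * snd p) = 0)"

lemma nag_rel_part_equivp: "part_equivp (nag_rel :: 'a::comm_ring_1 poly \<times> 'a poly \<Rightarrow> _)"
proof (rule part_equivpI)
  show "\<exists>x. nag_rel x x"
    by (rule exI[of _ "(0, 1)"]) (auto simp: nag_rel_def intro: nag_den.one)
  show "symp nag_rel"
    unfolding symp_def nag_rel_def
    by (auto simp: algebra_simps) (metis mult.commute)
  show "transp nag_rel"
  proof (rule transpI)
    fix x y z
    assume xy: "nag_rel x y" and yz: "nag_rel y z"
    obtain a b where x: "x = (a, b)" by fastforce
    obtain c d where y: "y = (c, d)" by fastforce
    obtain e f where z: "z = (e, f)" by fastforce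
    obtain h k where d: "b \<in> nag_den" "d \<in> nag_den" "f \<in> nag_den" "h \<in> nag_den" "k \<in> nag_den"
      and 1: "h * (a * d - c * b) = 0" and 2: "k * (c * f - e * d) = 0"
      using xy yz unfolding x y z nag_rel_def by auto
    have "(h * k * d) * (a * f - e * b) =
          (k * f) * (h * (a * d - c * b)) + (h * b) * (k * (c * f - e * d))"
      by (simp add: algebra_simps)
    also have "\<dots> = 0" using 1 2 by simp
    finally have "(h * k * d) * (a * f - e * b) = 0" .
    moreover have "h * k * d \<in> nag_den" using d by (meson nag_den_mult)
    ultimately show "nag_rel x z"
      unfolding x z nag_rel_def using d by auto
  qed
qed

quotient_type (overloaded) 'a nagata = "'a::comm_ring_1 poly \<times> 'a poly" / partial: nag_rel
  by (rule nag_rel_part_equivp)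

instantiation nagata :: (comm_ring_1) "{zero, one, plus, times, uminus, minus}"
begin

lift_definition zero_nagata :: "'a nagata" is "(0, 1)"
  by (auto simp: nag_rel_def intro: nag_den.one)

lift_definition one_nagata :: "'a nagata" is "(1, 1)"
  by (auto simp: nag_rel_def intro: nag_den.one)

lift_definition plus_nagata :: "'a nagata \<Rightarrow> 'a nagata \<Rightarrow> 'a nagata"
  is "\<lambda>(a, b) (c, d). (a * d + c * b, b * d)"
proof (clarify)
  fix a b c d a' b' c' d' :: "'a poly"
  assume r1: "nag_rel (a, b) (a', b')" and r2: "nag_rel (c, d) (c', d')"
  then obtain h k where hk: "h \<in> nag_den" "k \<in> nag_den" "h * (a * b' - a' * b) = 0"
    "k * (c * d' - c' * d) = 0" and den: "b \<in> nag_den" "b' \<in> nag_den" "d \<in> nag_den" "d' \<in> nag_den"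
    by (auto simp: nag_rel_def)
  have "(h * k) * ((a * d + c * b) * (b' * d') - (a' * d' + c' * b') * (b * d)) =
        (k * d * d') * (h * (a * b' - a' * b)) + (h * b * b') * (k * (c * d' - c' * d))"
    by (simp add: algebra_simps)
  also have "\<dots> = 0" using hk by simp
  finally show "nag_rel (a * d + c * b, b * d) (a' * d' + c' * b', b' * d')"
    unfolding nag_rel_def using hk den by (auto intro: nag_den_mult)
qed

lift_definition times_nagata :: "'a nagata \<Rightarrow> 'a nagata \<Rightarrow> 'a nagata"
  is "\<lambda>(a, b) (c, d). (a * c, b * d)"
proof (clarify)
  fix a b c d a' b' c' d' :: "'a poly"
  assume r1: "nag_rel (a, b) (a', b')" and r2: "nag_rel (c, d) (c', d')"
  then obtain h k where hk: "h \<in> nag_den" "k \<in> nag_den" "h * (a * b' - a' * b) = 0"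
    "k * (c * d' - c' * d) = 0" and den: "b \<in> nag_den" "b' \<in> nag_den" "d \<in> nag_den" "d' \<in> nag_den"
    by (auto simp: nag_rel_def)
  have "(h * k) * ((a * c) * (b' * d') - (a' * c') * (b * d)) =
        (k * c * d') * (h * (a * b' - a' * b)) + (h * a' * b) * (k * (c * d' - c' * d))"
    by (simp add: algebra_simps)
  also have "\<dots> = 0" using hk by simp
  finally show "nag_rel (a * c, b * d) (a' * c', b' * d')"
    unfolding nag_rel_def using hk den by (auto intro: nag_den_mult)
qed

lift_definition uminus_nagata :: "'a nagata \<Rightarrow> 'a nagata"
  is "\<lambda>(a, b). (- a, b)"
proof (clarify)
  fix a b a' b' :: "'a poly"
  assume "nag_rel (a, b) (a', b')"
  then obtain h where "h \<in> nag_den" "h * (a * b' - a' * b) = 0" "b \<in> nag_den" "b' \<in> nag_den"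
    by (auto simp: nag_rel_def)
  then show "nag_rel (- a, b) (- a', b')"
    unfolding nag_rel_def by (auto intro!: bexI[of _ h] simp: algebra_simps)
qed

definition minus_nagata :: "'a nagata \<Rightarrow> 'a nagata \<Rightarrow> 'a nagata" where
  "minus_nagata x y = x + (- y)"

instance ..
end

lemma nag_rel_eqI:
  "b \<in> nag_den \<Longrightarrow> d \<in> nag_den \<Longrightarrow> a * d = c * b \<Longrightarrow> nag_rel (a, b) (c, d)"
  unfolding nag_rel_def by (auto intro!: bexI[of _ 1] nag_den.one)

lemma nag_rel_dom: "nag_rel p p \<longleftrightarrow> snd p \<in> nag_den"
  unfolding nag_rel_def by (auto intro!: bexI[of _ 1] nag_den.one)

instance nagata :: (comm_ring_1) "{comm_ring, comm_monoid_mult}"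
proof
  fix a b c :: "'a nagata"
  show "a * b * c = a * (b * c)"
    by transfer (auto intro!: nag_rel_eqI nag_den_mult simp: nag_rel_dom algebra_simps)
  show "a * b = b * a"
    by transfer (auto intro!: nag_rel_eqI nag_den_mult simp: nag_rel_dom algebra_simps)
  show "1 * a = a"
    by transfer (auto intro!: nag_rel_eqI nag_den_mult simp: nag_rel_dom algebra_simps)
  show "a + b + c = a + (b + c)"
    by transfer (auto intro!: nag_rel_eqI nag_den_mult simp: nag_rel_dom algebra_simps)
  show "a + b = b + a"
    by transfer (auto intro!: nag_rel_eqI nag_den_mult simp: nag_rel_dom algebra_simps)
  show "0 + a = a"
    by transfer (auto intro!: nag_rel_eqI nag_den_mult simp: nag_rel_dom algebra_simps)
  show "- a + a = 0"
    by transfer (auto intro!: nag_rel_eqI nag_den_mult nag_den.one simp: nag_rel_dom algebra_simps)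
  show "a - b = a + - b"
    by (simp add: minus_nagata_def)
  show "(a + b) * c = a * c + b * c"
    by transfer (auto intro!: nag_rel_eqI nag_den_mult simp: nag_rel_dom algebra_simps)
qed

definition nag_frac :: "'a::comm_ring_1 poly \<Rightarrow> 'a poly \<Rightarrow> 'a nagata" where
  "nag_frac f g = abs_nagata (if g \<in> nag_den then (f, g) else (0, 1))"

definition nag_of :: "'a::comm_ring_1 \<Rightarrow> 'a nagata" where
  "nag_of s = nag_frac [:s:] 1"

text \<open>The Nagata ring R(X) of a subring R \<subseteq> S, viewed (via the canonical injection) inside S(X).\<close>
definition nagata_of :: "'a::comm_ring_1 set \<Rightarrow> 'a nagata set" where
  "nagata_of R = {nag_frac f g | f g. (\<forall>i. coeff f i \<in> R) \<and> content_unit_in R g}"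

text \<open>Formal Z-linear combinations of pairs (r, s) with r \<in> R(X), s \<in> S (free abelian group).\<close>
definition free_comb :: "'a::comm_ring_1 set \<Rightarrow> ('a nagata \<times> 'a \<Rightarrow> int) set" where
  "free_comb R = {u. finite {p. u p \<noteq> 0} \<and> (\<forall>p. u p \<noteq> 0 \<longrightarrow> fst p \<in> nagata_of R)}"

definition delta :: "'b \<Rightarrow> 'b \<Rightarrow> int" where
  "delta p = (\<lambda>q. if q = p then 1 else 0)"

text \<open>Subgroup of bilinearity / R-balancedness relations defining R(X) \<otimes>_R S.\<close>
inductive_set tensor_rels :: "'a::comm_ring_1 set \<Rightarrow> ('a nagata \<times> 'a \<Rightarrow> int) set"
  for R :: "'a set" where
  zero: "(\<lambda>_. 0) \<in> tensor_rels R"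
| add_left: "r \<in> nagata_of R \<Longrightarrow> r' \<in> nagata_of R \<Longrightarrow>
     (\<lambda>q. delta (r + r', s) q - delta (r, s) q - delta (r', s) q) \<in> tensor_rels R"
| add_right: "r \<in> nagata_of R \<Longrightarrow>
     (\<lambda>q. delta (r, s + s') q - delta (r, s) q - delta (r, s') q) \<in> tensor_rels R"
| balanced: "r \<in> nagata_of R \<Longrightarrow> a \<in> R \<Longrightarrow>
     (\<lambda>q. delta (r * nag_of a, s) q - delta (r, a * s) q) \<in> tensor_rels R"
| plus: "u \<in> tensor_rels R \<Longrightarrow> v \<in> tensor_rels R \<Longrightarrow> (\<lambda>q. u q + v q) \<in> tensor_rels R"
| neg: "u \<in> tensor_rels R \<Longrightarrow> (\<lambda>q. - u q) \<in> tensor_rels R"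

text \<open>Image of a formal combination under r \<otimes> s \<mapsto> r \<cdot> s.\<close>
definition tensor_eval :: "('a::comm_ring_1 nagata \<times> 'a \<Rightarrow> int) \<Rightarrow> 'a nagata" where
  "tensor_eval u = (\<Sum>p\<in>{p. u p \<noteq> 0}. fst p * nag_of (of_int (u p) * snd p))"

text \<open>The natural map R(X) \<otimes>_R S \<rightarrow> S(X) (S = UNIV) is an isomorphism: the induced map
  from the quotient free_comb / tensor_rels is surjective and injective.\<close>
definition nagata_tensor_iso :: "'a::comm_ring_1 set \<Rightarrow> bool" where
  "nagata_tensor_iso R \<longleftrightarrow>
     (\<forall>\<xi>::'a nagata. \<exists>u\<in>free_comb R. tensor_eval u = \<xi>) \<and>
     (\<forall>u\<in>free_comb R. tensor_eval u = 0 \<longrightarrow> u \<in> tensor_rels R)"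

end

theory Submission
  imports Defs
begin

(* Let N = M R(X) be the ideal of fractions f/g with f in M[X] and g of content one.  By McCoy's
   theorem content-one polynomials are regular, so fractions in R(X) compare by cross-multiplication,
   and Gauss's lemma (a product of two polynomials each having a coefficient outside a prime P has
   one outside P) makes N a prime of R(X); a witness b of M in Supp(S/R) also witnesses N.
   Conversely, let Q be in the support of S(X)/R(X).  By the tensor hypothesis every element of S(X)
   is a finite sum of products r s with r in R(X) and s in S, so if each s had a denominator outside
   the contraction of Q, so would every element of S(X); hence that contraction lies in
   Supp(S/R) = {M}, and N is contained in Q.  As Supp(S/R) is closed under enlarging primes, M is
   maximal, and then so is N: if f/g is not in N, then m + c a = 1 for a coefficient a of f and some
   m in M, and f + m X^n (n large) has content one, so it is a unit of R(X) congruent to f mod N.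
   Hence Q = N. *)

section \<open>Content-one polynomials are regular\<close>

lemma coeff_mult_lead_coeff_eq_0:
  fixes h q :: "'a::comm_ring_1 poly"
  assumes hq: "h * q = 0" and above: "\<And>k. i < k \<Longrightarrow> smult (coeff h k) q = 0"
  shows "coeff h i * lead_coeff q = 0"
proof -
  have "coeff h k * coeff q (i + degree q - k) = 0" if "k \<noteq> i" for k
  proof (cases "k < i")
    case True
    then show ?thesis by (simp add: coeff_eq_0)
  next
    case False
    with that have "smult (coeff h k) q = 0" by (intro above) simp
    then show ?thesis by (metis coeff_smult coeff_0)
  qed
  then have "coeff (h * q) (i + degree q) = coeff h i * lead_coeff q"
    unfolding coeff_mult by (subst sum.remove[of _ i]) auto
  with hq show ?thesis by simp
qed

lemma content_unit_in_annihilator: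
  fixes h :: "'a::comm_ring_1 poly"
  assumes h: "content_unit_in UNIV h" and ann: "\<And>k. coeff h k * x = 0"
  shows "x = 0"
proof -
  obtain a where a: "(\<Sum>i\<le>degree h. a i * coeff h i) = 1"
    using h unfolding content_unit_in_def by blast
  have "(\<Sum>i\<le>degree h. a i * coeff h i) * x = 0"
    using ann by (simp add: sum_distrib_right mult.assoc)
  with a show ?thesis by simp
qed

text \<open>McCoy's theorem for content-one polynomials: a nonzero q with h q = 0 would be replaced by
  c q of smaller degree, where c is the top coefficient of h that does not kill q.\<close>
lemma content_unit_in_mult_eq_0D:
  fixes h q :: "'a::comm_ring_1 poly"
  assumes h: "content_unit_in UNIV h" and hq: "h * q = 0"
  shows "q = 0"
  using hq
proof (induction "degree q" arbitrary: q rule: less_induct)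
  case less
  show ?case
  proof (rule ccontr)
    assume q0: "q \<noteq> 0"
    define K where "K = {k. smult (coeff h k) q \<noteq> 0}"
    show False
    proof (cases "K = {}")
      case True
      have "coeff h k * lead_coeff q = 0" for k
      proof -
        have "smult (coeff h k) q = 0" using True unfolding K_def by blast
        then show ?thesis by (metis coeff_smult coeff_0)
      qed
      then have "lead_coeff q = 0" by (rule content_unit_in_annihilator[OF h])
      with q0 show False by simp
    next
      case False
      have "finite K"
        by (rule finite_subset[of _ "{..degree h}"]) (auto simp: K_def intro: le_degree)
      define i where "i = Max K"
      have q': "smult (coeff h i) q \<noteq> 0"
        using Max_in[OF \<open>finite K\<close> False] unfolding i_def K_def by simp
      have "smult (coeff h k) q = 0" if "i < k" for k
        using Max_ge[OF \<open>finite K\<close>, of k] that unfolding i_def K_def by force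
      then have "coeff (smult (coeff h i) q) (degree q) = 0"
        using coeff_mult_lead_coeff_eq_0[OF less.prems] by simp
      then have "degree (smult (coeff h i) q) < degree q"
        using q' degree_smult_le le_neq_implies_less leading_coeff_0_iff by metis
      moreover have "h * smult (coeff h i) q = 0"
        using less.prems by (metis mult_smult_right smult_0_right)
      ultimately show False
        using less.hyps q' by blast
    qed
  qed
qed

lemma nag_den_mult_eq_0D: "g \<in> nag_den \<Longrightarrow> g * q = 0 \<Longrightarrow> q = 0"
proof (induction g arbitrary: q rule: nag_den.induct)
  case one
  then show ?case by simp
next
  case (mult g h)
  then show ?case
    using content_unit_in_mult_eq_0D[OF mult.hyps(1), of "h * q"] by (simp add: mult.assoc)
qed

lemma content_unit_in_nag_den: "content_unit_in R g \<Longrightarrow> g \<in> nag_den"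
  using nag_den.mult[OF _ nag_den.one, of g] unfolding content_unit_in_def by auto

lemma nag_frac_eq_abs: "b \<in> nag_den \<Longrightarrow> nag_frac a b = abs_nagata (a, b)"
  unfolding nag_frac_def by simp

lemma nag_frac_eq_iff:
  assumes "b \<in> nag_den" "d \<in> nag_den"
  shows "nag_frac a b = nag_frac c d \<longleftrightarrow> a * d = c * b"
proof -
  have "nag_frac a b = nag_frac c d \<longleftrightarrow> nag_rel (a, b) (c, d)"
    using assms Quotient3_rel[OF Quotient3_nagata, of "(a, b)" "(c, d)"]
    by (simp add: nag_frac_eq_abs nag_rel_dom)
  also have "\<dots> \<longleftrightarrow> a * d = c * b"
    using assms nag_den_mult_eq_0D[of _ "a * d - c * b"] unfolding nag_rel_def
    by (auto intro!: bexI[of _ 1] nag_den.one)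
  finally show ?thesis .
qed

lemma nag_frac_add:
  "b \<in> nag_den \<Longrightarrow> d \<in> nag_den \<Longrightarrow> nag_frac a b + nag_frac c d = nag_frac (a * d + c * b) (b * d)"
  by (simp add: nag_frac_eq_abs nag_den_mult plus_nagata.abs_eq nag_rel_dom)

lemma nag_frac_add_same: "b \<in> nag_den \<Longrightarrow> nag_frac a b + nag_frac c b = nag_frac (a + c) b"
  by (simp add: nag_frac_add nag_frac_eq_iff nag_den_mult algebra_simps)

lemma nag_frac_mult:
  "b \<in> nag_den \<Longrightarrow> d \<in> nag_den \<Longrightarrow> nag_frac a b * nag_frac c d = nag_frac (a * c) (b * d)"
  by (simp add: nag_frac_eq_abs nag_den_mult times_nagata.abs_eq nag_rel_dom)

lemma nag_frac_uminus: "b \<in> nag_den \<Longrightarrow> - nag_frac a b = nag_frac (- a) b"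
  by (simp add: nag_frac_eq_abs uminus_nagata.abs_eq nag_rel_dom)

lemma zero_nagata_eq_nag_frac: "0 = nag_frac 0 1"
  by (simp add: nag_frac_eq_abs nag_den.one zero_nagata.abs_eq)

lemma one_nagata_eq_nag_frac: "1 = nag_frac 1 1"
  by (simp add: nag_frac_eq_abs nag_den.one one_nagata.abs_eq)

lemma nag_frac_pCons:
  assumes g: "g \<in> nag_den"
  shows "nag_frac (pCons a p) g = nag_frac 1 g * nag_of a + nag_frac [:0, 1:] 1 * nag_frac p g"
proof -
  have "nag_frac (pCons a p) g = nag_frac [:a:] g + nag_frac (pCons 0 p) g"
    using nag_frac_add_same[OF g, of "[:a:]" "pCons 0 p"] by simp
  also have "nag_frac [:a:] g = nag_frac 1 g * nag_of a"
    unfolding nag_of_def using nag_frac_mult[OF g nag_den.one] by simp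
  also have "nag_frac (pCons 0 p) g = nag_frac [:0, 1:] 1 * nag_frac p g"
    using nag_frac_mult[OF nag_den.one g] by simp
  finally show ?thesis .
qed

lemma nag_of_add: "nag_of (r + s) = nag_of r + nag_of s"
  unfolding nag_of_def by (simp add: nag_frac_add_same nag_den.one)

lemma nag_of_mult: "nag_of (r * s) = nag_of r * nag_of s"
  unfolding nag_of_def by (simp add: nag_frac_mult nag_den.one mult.commute)

lemma nag_of_uminus: "nag_of (- r) = - nag_of r"
  unfolding nag_of_def by (simp add: nag_frac_uminus nag_den.one)

lemma nag_of_0: "nag_of 0 = 0"
  unfolding nag_of_def by (simp add: zero_nagata_eq_nag_frac)

lemma nag_of_1: "nag_of 1 = 1"
  unfolding nag_of_def by (simp add: one_nagata_eq_nag_frac pCons_one)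

section \<open>Ideals of a subring\<close>

lemma subring_of_zero: "subring_of R \<Longrightarrow> 0 \<in> R"
  and subring_of_one: "subring_of R \<Longrightarrow> 1 \<in> R"
  and subring_of_add: "subring_of R \<Longrightarrow> x \<in> R \<Longrightarrow> y \<in> R \<Longrightarrow> x + y \<in> R"
  and subring_of_mult: "subring_of R \<Longrightarrow> x \<in> R \<Longrightarrow> y \<in> R \<Longrightarrow> x * y \<in> R"
  and subring_of_uminus: "subring_of R \<Longrightarrow> x \<in> R \<Longrightarrow> - x \<in> R"
  unfolding subring_of_def by auto

lemma subring_of_sum: "subring_of R \<Longrightarrow> (\<And>x. x \<in> S \<Longrightarrow> f x \<in> R) \<Longrightarrow> sum f S \<in> R"
  by (induction S rule: infinite_finite_induct) (auto simp: subring_of_zero subring_of_add)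

lemma subring_of_prod:
  "subring_of (R::'a::comm_ring_1 set) \<Longrightarrow> (\<And>x. x \<in> S \<Longrightarrow> f x \<in> R) \<Longrightarrow> prod f S \<in> R"
  by (induction S rule: infinite_finite_induct) (auto simp: subring_of_one subring_of_mult)

lemma ideal_in_subset: "ideal_in R I \<Longrightarrow> I \<subseteq> R"
  and ideal_in_zero: "ideal_in R I \<Longrightarrow> 0 \<in> I"
  and ideal_in_add: "ideal_in R I \<Longrightarrow> x \<in> I \<Longrightarrow> y \<in> I \<Longrightarrow> x + y \<in> I"
  and ideal_in_uminus: "ideal_in R I \<Longrightarrow> x \<in> I \<Longrightarrow> - x \<in> I"
  and ideal_in_mult_left: "ideal_in R I \<Longrightarrow> a \<in> R \<Longrightarrow> x \<in> I \<Longrightarrow> a * x \<in> I"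
  unfolding ideal_in_def by auto

lemma ideal_in_mult_right: "ideal_in R I \<Longrightarrow> a \<in> R \<Longrightarrow> x \<in> I \<Longrightarrow> x * a \<in> I"
  using ideal_in_mult_left by (metis mult.commute)

lemma ideal_in_diff: "ideal_in R I \<Longrightarrow> x \<in> I \<Longrightarrow> y \<in> I \<Longrightarrow> x - y \<in> I"
  using ideal_in_add ideal_in_uminus by (metis diff_conv_add_uminus)

lemma ideal_in_sum: "ideal_in R I \<Longrightarrow> (\<And>x. x \<in> S \<Longrightarrow> f x \<in> I) \<Longrightarrow> sum f S \<in> I"
  by (induction S rule: infinite_finite_induct) (auto simp: ideal_in_zero ideal_in_add)

lemma subring_of_imp_ideal_in: "subring_of R \<Longrightarrow> ideal_in R R"
  unfolding subring_of_def ideal_in_def by blast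

lemma ideal_in_eq_if_one_mem:
  assumes "ideal_in (R::'a::{comm_ring,monoid_mult} set) I" "1 \<in> I"
  shows "I = R"
proof
  show "R \<subseteq> I"
    using ideal_in_mult_right[OF assms(1) _ assms(2)] by (metis mult_1 subsetI)
qed (rule ideal_in_subset[OF assms(1)])

lemma prime_ideal_in_imp_ideal_in: "prime_ideal_in R P \<Longrightarrow> ideal_in R P"
  unfolding prime_ideal_in_def by blast

lemma prime_ideal_in_one_notin: "prime_ideal_in (R::'a::{comm_ring,monoid_mult} set) P \<Longrightarrow> 1 \<notin> P"
  unfolding prime_ideal_in_def using ideal_in_eq_if_one_mem by blast

lemma prime_ideal_in_prod_notin:
  fixes R :: "'a::comm_ring_1 set"
  assumes sr: "subring_of R" and P: "prime_ideal_in R P"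
  shows "finite S \<Longrightarrow> (\<And>x. x \<in> S \<Longrightarrow> f x \<in> R - P) \<Longrightarrow> prod f S \<in> R - P"
proof (induction S rule: finite_induct)
  case empty
  then show ?case using prime_ideal_in_one_notin[OF P] subring_of_one[OF sr] by simp
next
  case (insert x F)
  then have F: "prod f F \<in> R" "prod f F \<notin> P" and x: "f x \<in> R" "f x \<notin> P" by auto
  have "f x * prod f F \<notin> P"
    using P F x unfolding prime_ideal_in_def by blast
  then show ?case
    using insert(1,2) subring_of_mult[OF sr x(1) F(1)] by simp
qed

lemma ideal_in_add_multiples:
  fixes R :: "'a::comm_ring_1 set"
  assumes sr: "subring_of R" and I: "ideal_in R I" and a: "a \<in> R"
  shows "ideal_in R {m + c * a | m c. m \<in> I \<and> c \<in> R}" (is "ideal_in R ?J")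
  unfolding ideal_in_def
proof (intro conjI ballI)
  show "?J \<subseteq> R"
    using a ideal_in_subset[OF I] subring_of_add[OF sr] subring_of_mult[OF sr] by blast
  show "0 \<in> ?J"
    using ideal_in_zero[OF I] subring_of_zero[OF sr] by force
next
  fix x y assume "x \<in> ?J" "y \<in> ?J"
  then obtain m c m' c' where "x = m + c * a" "y = m' + c' * a" "m \<in> I" "c \<in> R" "m' \<in> I" "c' \<in> R"
    by auto
  then have "x + y = (m + m') + (c + c') * a" "m + m' \<in> I" "c + c' \<in> R"
    by (auto simp: algebra_simps ideal_in_add[OF I] subring_of_add[OF sr])
  then show "x + y \<in> ?J" by blast
next
  fix x assume "x \<in> ?J"
  then obtain m c where "x = m + c * a" "m \<in> I" "c \<in> R" by auto
  then have "- x = (- m) + (- c) * a" "- m \<in> I" "- c \<in> R"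
    by (auto simp: ideal_in_uminus[OF I] subring_of_uminus[OF sr])
  then show "- x \<in> ?J" by blast
next
  fix r x assume r: "r \<in> R" and "x \<in> ?J"
  then obtain m c where "x = m + c * a" "m \<in> I" "c \<in> R" by auto
  moreover have "r * m \<in> I" "r * c \<in> R"
    using ideal_in_mult_left[OF I r \<open>m \<in> I\<close>] subring_of_mult[OF sr r \<open>c \<in> R\<close>] .
  ultimately have "r * x = (r * m) + (r * c) * a \<and> r * m \<in> I \<and> r * c \<in> R"
    by (simp add: algebra_simps)
  then show "r * x \<in> ?J" by blast
qed

lemma ideal_in_Union_chain:
  assumes "C \<noteq> {}" and "chain\<^sub>\<subseteq> C" and "\<And>J. J \<in> C \<Longrightarrow> ideal_in R J"
  shows "ideal_in R (\<Union>C)"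
  unfolding ideal_in_def
proof (intro conjI ballI)
  show "\<Union>C \<subseteq> R" "0 \<in> \<Union>C"
    using assms(1,3) ideal_in_subset ideal_in_zero by fastforce+
next
  fix x y assume "x \<in> \<Union>C" "y \<in> \<Union>C"
  then obtain X Y where XY: "X \<in> C" "Y \<in> C" "x \<in> X" "y \<in> Y" by auto
  with assms(2) have "x \<in> X \<union> Y \<and> y \<in> X \<union> Y \<and> (X \<union> Y = X \<or> X \<union> Y = Y)"
    unfolding chain_subset_def by blast
  then show "x + y \<in> \<Union>C"
    using XY assms(3) ideal_in_add by (metis UnionI)
next
  fix x assume "x \<in> \<Union>C"
  then show "- x \<in> \<Union>C" using assms(3) ideal_in_uminus by blast
next
  fix a x assume "a \<in> R" "x \<in> \<Union>C"
  then show "a * x \<in> \<Union>C" using assms(3) ideal_in_mult_left by blast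
qed

lemma prime_ideal_in_if_maximal:
  fixes R :: "'a::comm_ring_1 set"
  assumes sr: "subring_of R" and P: "ideal_in R P" "1 \<notin> P"
    and maximal: "\<And>J. ideal_in R J \<Longrightarrow> P \<subseteq> J \<Longrightarrow> 1 \<notin> J \<Longrightarrow> J = P"
  shows "prime_ideal_in R P"
  unfolding prime_ideal_in_def
proof (intro conjI ballI impI)
  show "ideal_in R P" by (fact P(1))
  show "P \<noteq> R" using P(2) subring_of_one[OF sr] by blast
next
  fix a b assume ab: "a \<in> R" "b \<in> R" "a * b \<in> P"
  show "a \<in> P \<or> b \<in> P"
  proof (cases "a \<in> P")
    case False
    define J where "J = {m + c * a | m c. m \<in> P \<and> c \<in> R}"
    have J: "ideal_in R J" unfolding J_def by (rule ideal_in_add_multiples[OF sr P(1) ab(1)])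
    have "P \<subseteq> J" unfolding J_def using subring_of_zero[OF sr] by force
    moreover have "a \<in> J" unfolding J_def using subring_of_one[OF sr] ideal_in_zero[OF P(1)] by force
    ultimately have "1 \<in> J" using maximal[OF J] False by blast
    then obtain m c where mc: "1 = m + c * a" "m \<in> P" "c \<in> R" unfolding J_def by auto
    then have "b = b * m + c * (a * b)" by (metis mult.commute mult.left_commute mult_1 distrib_left)
    then have "b \<in> P"
      using ideal_in_add[OF P(1) ideal_in_mult_left[OF P(1) ab(2) mc(2)]
          ideal_in_mult_left[OF P(1) mc(3) ab(3)]] by simp
    then show ?thesis ..
  qed simp
qed

lemma ex_prime_ideal_in_superset:
  fixes R :: "'a::comm_ring_1 set"
  assumes sr: "subring_of R" and I: "ideal_in R I" "1 \<notin> I"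
  obtains P where "prime_ideal_in R P" "I \<subseteq> P"
proof -
  define A where "A = {J. ideal_in R J \<and> I \<subseteq> J \<and> 1 \<notin> J}"
  have bound: "\<exists>U\<in>A. \<forall>X\<in>C. X \<subseteq> U" if C: "C \<in> chains A" for C
  proof (cases "C = {}")
    case True
    then show ?thesis using I A_def by auto
  next
    case False
    have CA: "C \<subseteq> A" using chainsD2[OF C] .
    have "ideal_in R (\<Union>C)"
    proof (rule ideal_in_Union_chain[OF False])
      show "chain\<^sub>\<subseteq> C" using C unfolding chains_def by blast
      show "ideal_in R J" if "J \<in> C" for J using that CA unfolding A_def by blast
    qed
    moreover have "I \<subseteq> \<Union>C" using False CA unfolding A_def by blast
    moreover have "1 \<notin> \<Union>C" using CA unfolding A_def by blast
    ultimately show ?thesis unfolding A_def by blast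
  qed
  have "\<exists>P\<in>A. \<forall>X\<in>A. P \<subseteq> X \<longrightarrow> X = P"
    using bound by (intro Zorn_Lemma2) blast
  then obtain P where P: "P \<in> A" and max: "\<forall>X\<in>A. P \<subseteq> X \<longrightarrow> X = P" ..
  have "prime_ideal_in R P"
  proof (rule prime_ideal_in_if_maximal[OF sr])
    show "ideal_in R P" "1 \<notin> P" using P unfolding A_def by blast+
    show "J = P" if "ideal_in R J" "P \<subseteq> J" "1 \<notin> J" for J
      using that P max unfolding A_def by blast
  qed
  moreover have "I \<subseteq> P" using P unfolding A_def by blast
  ultimately show thesis by (rule that)
qed

section \<open>The support of S/R\<close>

lemma supp_ext_upward: "P \<in> supp_ext R \<Longrightarrow> prime_ideal_in R Q \<Longrightarrow> P \<subseteq> Q \<Longrightarrow> Q \<in> supp_ext R"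
  unfolding supp_ext_def by blast

text \<open>A prime above M + R r is in the support by upward closure, hence equals M.\<close>
lemma crucial_imp_maximal:
  fixes R :: "'a::comm_ring_1 set"
  assumes sr: "subring_of R" and cr: "crucial R M"
  shows "\<forall>r\<in>R - M. \<exists>m\<in>M. \<exists>c\<in>R. m + c * r = 1"
proof (intro ballI, rule ccontr)
  fix r assume r: "r \<in> R - M" and "\<not> (\<exists>m\<in>M. \<exists>c\<in>R. m + c * r = 1)"
  have M: "M \<in> supp_ext R" using cr unfolding crucial_def by blast
  then have MI: "ideal_in R M" unfolding supp_ext_def prime_ideal_in_def by blast
  define J where "J = {m + c * r | m c. m \<in> M \<and> c \<in> R}"
  have "ideal_in R J" unfolding J_def using ideal_in_add_multiples[OF sr MI] r by blast
  moreover have "1 \<notin> J" unfolding J_def using \<open>\<not> _\<close> by force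
  ultimately obtain P where P: "prime_ideal_in R P" "J \<subseteq> P"
    using ex_prime_ideal_in_superset[OF sr] by blast
  have "M \<subseteq> J" unfolding J_def using subring_of_zero[OF sr] by force
  moreover have "r \<in> J" unfolding J_def using r subring_of_one[OF sr] ideal_in_zero[OF MI] by force
  ultimately have "P \<in> supp_ext R" "r \<in> P" using supp_ext_upward[OF M P(1)] P(2) by blast+
  then show False using cr r unfolding crucial_def by blast
qed

section \<open>Polynomials over an ideal and their content\<close>

definition poly_over :: "'a::comm_ring_1 set \<Rightarrow> 'a poly \<Rightarrow> bool" where
  "poly_over A f \<longleftrightarrow> (\<forall>i. coeff f i \<in> A)"

lemma poly_over_add: "ideal_in R I \<Longrightarrow> poly_over I f \<Longrightarrow> poly_over I g \<Longrightarrow> poly_over I (f + g)"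
  unfolding poly_over_def by (simp add: ideal_in_add)

lemma poly_over_uminus: "ideal_in R I \<Longrightarrow> poly_over I f \<Longrightarrow> poly_over I (- f)"
  unfolding poly_over_def by (simp add: ideal_in_uminus)

lemma poly_over_mult: "ideal_in R I \<Longrightarrow> poly_over I f \<Longrightarrow> poly_over R g \<Longrightarrow> poly_over I (f * g)"
  unfolding poly_over_def by (simp add: coeff_mult ideal_in_sum ideal_in_mult_right)

lemma poly_over_mult_left: "ideal_in R I \<Longrightarrow> poly_over R f \<Longrightarrow> poly_over I g \<Longrightarrow> poly_over I (f * g)"
  using poly_over_mult by (metis mult.commute)

lemma poly_over_mono: "ideal_in R I \<Longrightarrow> poly_over I f \<Longrightarrow> poly_over R f"
  unfolding poly_over_def using ideal_in_subset by blast

lemma poly_over_const: "ideal_in R I \<Longrightarrow> r \<in> I \<Longrightarrow> poly_over I [:r:]"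
  unfolding poly_over_def by (simp add: coeff_pCons ideal_in_zero split: nat.split)

lemma poly_over_monom: "ideal_in R I \<Longrightarrow> r \<in> I \<Longrightarrow> poly_over I (monom r n)"
  unfolding poly_over_def by (simp add: coeff_monom ideal_in_zero)

lemma poly_over_one: "subring_of R \<Longrightarrow> poly_over R 1"
  unfolding poly_over_def by (simp add: subring_of_zero subring_of_one coeff_1)

lemma poly_over_mult_subring: "subring_of R \<Longrightarrow> poly_over R f \<Longrightarrow> poly_over R g \<Longrightarrow> poly_over R (f * g)"
  using poly_over_mult[OF subring_of_imp_ideal_in] .

text \<open>Gauss's lemma: if i and j are the least degrees in which f and g have a coefficient outside P,
  then the coefficient of f g in degree i + j is congruent modulo P to the product of those two.\<close>
lemma prime_ideal_in_coeff_mult_notin: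
  fixes R :: "'a::comm_ring_1 set"
  assumes P: "prime_ideal_in R P" and f: "poly_over R f" and g: "poly_over R g"
    and fP: "\<exists>i. coeff f i \<notin> P" and gP: "\<exists>j. coeff g j \<notin> P"
  shows "\<exists>k. coeff (f * g) k \<notin> P"
proof -
  have I: "ideal_in R P" by (rule prime_ideal_in_imp_ideal_in[OF P])
  define i where "i = (LEAST i. coeff f i \<notin> P)"
  define j where "j = (LEAST j. coeff g j \<notin> P)"
  have fi: "coeff f i \<notin> P" using fP i_def by (metis LeastI)
  have gj: "coeff g j \<notin> P" using gP j_def by (metis LeastI)
  define rest where "rest = (\<Sum>k\<in>{..i + j} - {i}. coeff f k * coeff g (i + j - k))"
  have "rest \<in> P"
    unfolding rest_def
  proof (rule ideal_in_sum[OF I])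
    fix k assume k: "k \<in> {..i + j} - {i}"
    show "coeff f k * coeff g (i + j - k) \<in> P"
    proof (cases "k < i")
      case True
      then have "coeff f k \<in> P" using i_def not_less_Least by blast
      then show ?thesis using g ideal_in_mult_right[OF I] poly_over_def by blast
    next
      case False
      with k have "i + j - k < j" by auto
      then have "coeff g (i + j - k) \<in> P" using j_def not_less_Least by blast
      then show ?thesis using f ideal_in_mult_left[OF I] poly_over_def by blast
    qed
  qed
  have "coeff (f * g) (i + j) = coeff f i * coeff g j + rest"
    unfolding coeff_mult rest_def by (subst sum.remove[of _ i]) auto
  then have "coeff f i * coeff g j = coeff (f * g) (i + j) - rest"
    by (simp add: algebra_simps)
  moreover have "coeff f i * coeff g j \<notin> P"
    using P fi gj f g unfolding prime_ideal_in_def poly_over_def by blast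
  ultimately have "coeff (f * g) (i + j) \<notin> P"
    using \<open>rest \<in> P\<close> ideal_in_diff[OF I] by metis
  then show ?thesis ..
qed

lemma content_unit_in_poly_over: "content_unit_in R g \<Longrightarrow> poly_over R g"
  unfolding content_unit_in_def poly_over_def by blast

lemma content_unit_in_coeff_notin:
  assumes I: "ideal_in R I" "1 \<notin> I" and g: "content_unit_in R g"
  shows "\<exists>i. coeff g i \<notin> I"
proof (rule ccontr)
  assume "\<not> ?thesis"
  moreover obtain a where a: "\<forall>i. a i \<in> R" "(\<Sum>i\<le>degree g. a i * coeff g i) = 1"
    using g unfolding content_unit_in_def by blast
  ultimately have "(\<Sum>i\<le>degree g. a i * coeff g i) \<in> I"
    using ideal_in_mult_left[OF I(1)] by (intro ideal_in_sum[OF I(1)]) blast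
  with a I show False by simp
qed

lemma content_unit_inI:
  assumes sr: "subring_of R" and g: "poly_over R g" and a: "\<forall>i. a i \<in> R"
    and sum: "(\<Sum>i\<le>n. a i * coeff g i) = 1"
  shows "content_unit_in R g"
proof -
  define a' where "a' i = (if i \<le> n then a i else 0)" for i
  define m where "m = max n (degree g)"
  have "(\<Sum>i\<le>degree g. a' i * coeff g i) = (\<Sum>i\<le>m. a' i * coeff g i)"
    by (rule sum.mono_neutral_left) (auto simp: m_def coeff_eq_0)
  also have "\<dots> = (\<Sum>i\<le>n. a' i * coeff g i)"
    by (rule sum.mono_neutral_right) (auto simp: m_def a'_def)
  also have "\<dots> = 1" using sum by (simp add: a'_def)
  finally show ?thesis
    unfolding content_unit_in_def using g a subring_of_zero[OF sr]
    by (intro conjI exI[of _ a']) (auto simp: poly_over_def a'_def)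
qed

definition content_ideal :: "'a::comm_ring_1 set \<Rightarrow> 'a poly \<Rightarrow> 'a set" where
  "content_ideal R p = {x. \<exists>a. (\<forall>i. a i \<in> R) \<and> (\<Sum>i\<le>degree p. a i * coeff p i) = x}"

lemma content_unit_in_iff: "content_unit_in R p \<longleftrightarrow> poly_over R p \<and> 1 \<in> content_ideal R p"
  unfolding content_unit_in_def content_ideal_def poly_over_def by simp

lemma ideal_in_content_ideal:
  assumes sr: "subring_of R" and p: "poly_over R p"
  shows "ideal_in R (content_ideal R p)"
proof -
  let ?c = "\<lambda>a. \<Sum>i\<le>degree p. a i * coeff p i"
  have mem: "x \<in> content_ideal R p \<longleftrightarrow> (\<exists>a. (\<forall>i. a i \<in> R) \<and> ?c a = x)" for x
    unfolding content_ideal_def by simp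
  show ?thesis
    unfolding ideal_in_def
  proof (intro conjI ballI subsetI)
    fix x assume "x \<in> content_ideal R p"
    then obtain a where a: "\<forall>i. a i \<in> R" "?c a = x" unfolding mem by blast
    have "?c a \<in> R"
      using a(1) p unfolding poly_over_def by (intro subring_of_sum[OF sr] subring_of_mult[OF sr]) auto
    then show "x \<in> R" using a(2) by simp
  next
    show "0 \<in> content_ideal R p"
      unfolding mem using subring_of_zero[OF sr] by (intro exI[of _ "\<lambda>_. 0"]) simp
  next
    fix x y assume "x \<in> content_ideal R p" "y \<in> content_ideal R p"
    then obtain a b where ab: "\<forall>i. a i \<in> R" "?c a = x" "\<forall>i. b i \<in> R" "?c b = y"
      unfolding mem by blast
    then have "?c (\<lambda>i. a i + b i) = x + y" by (simp add: distrib_right sum.distrib)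
    then show "x + y \<in> content_ideal R p"
      unfolding mem using ab subring_of_add[OF sr] by (intro exI[of _ "\<lambda>i. a i + b i"]) simp
  next
    fix x assume "x \<in> content_ideal R p"
    then obtain a where a: "\<forall>i. a i \<in> R" "?c a = x" unfolding mem by blast
    then have "?c (\<lambda>i. - a i) = - x" by (simp add: sum_negf)
    then show "- x \<in> content_ideal R p"
      unfolding mem using a subring_of_uminus[OF sr] by (intro exI[of _ "\<lambda>i. - a i"]) simp
  next
    fix r x assume r: "r \<in> R" and "x \<in> content_ideal R p"
    then obtain a where a: "\<forall>i. a i \<in> R" "?c a = x" unfolding mem by blast
    have "?c (\<lambda>i. r * a i) = r * x"
      unfolding a(2)[symmetric] by (simp add: sum_distrib_left mult.assoc)
    then show "r * x \<in> content_ideal R p"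
      unfolding mem using a r subring_of_mult[OF sr] by (intro exI[of _ "\<lambda>i. r * a i"]) simp
  qed
qed

lemma coeff_in_content_ideal:
  assumes sr: "subring_of R"
  shows "coeff p k \<in> content_ideal R p"
proof (cases "k \<le> degree p")
  case True
  define a :: "nat \<Rightarrow> 'a" where "a i = (if i = k then 1 else 0)" for i
  have "(\<Sum>i\<le>degree p. a i * coeff p i) = (\<Sum>i\<le>degree p. if i = k then coeff p i else 0)"
    by (rule sum.cong) (auto simp: a_def)
  also have "\<dots> = coeff p k" using True by simp
  finally have "(\<Sum>i\<le>degree p. a i * coeff p i) = coeff p k" .
  moreover have "\<forall>i. a i \<in> R" using subring_of_zero[OF sr] subring_of_one[OF sr] a_def by auto
  ultimately show ?thesis unfolding content_ideal_def by blast
next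
  case False
  then have "(\<Sum>i\<le>degree p. 0 * coeff p i) = coeff p k" by (simp add: coeff_eq_0)
  then show ?thesis
    unfolding content_ideal_def using subring_of_zero[OF sr] by (intro CollectI exI[of _ "\<lambda>_. 0"]) simp
qed

text \<open>The content of g h lies in no prime ideal, by Gauss's lemma.\<close>
lemma content_unit_in_mult:
  fixes R :: "'a::comm_ring_1 set"
  assumes sr: "subring_of R" and g: "content_unit_in R g" and h: "content_unit_in R h"
  shows "content_unit_in R (g * h)"
proof -
  have gh: "poly_over R (g * h)"
    using poly_over_mult_subring[OF sr] content_unit_in_poly_over g h by blast
  have "1 \<in> content_ideal R (g * h)"
  proof (rule ccontr)
    assume "1 \<notin> content_ideal R (g * h)"
    then obtain P where P: "prime_ideal_in R P" "content_ideal R (g * h) \<subseteq> P"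
      using ex_prime_ideal_in_superset[OF sr ideal_in_content_ideal[OF sr gh]] by blast
    have "ideal_in R P" by (rule prime_ideal_in_imp_ideal_in[OF P(1)])
    then have "\<exists>k. coeff (g * h) k \<notin> P"
      using prime_ideal_in_coeff_mult_notin[OF P(1) content_unit_in_poly_over[OF g]
          content_unit_in_poly_over[OF h]] content_unit_in_coeff_notin g h
        prime_ideal_in_one_notin[OF P(1)] by blast
    then show False using P(2) coeff_in_content_ideal[OF sr] by blast
  qed
  with gh show ?thesis by (simp add: content_unit_in_iff)
qed

lemma content_unit_in_one: "subring_of R \<Longrightarrow> content_unit_in R 1"
  unfolding content_unit_in_def
  by (intro conjI exI[of _ "\<lambda>_. 1"]) (auto simp: subring_of_zero subring_of_one coeff_1)

lemma content_unit_in_add_monom: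
  assumes sr: "subring_of R" and f: "poly_over R f" and m: "m \<in> R" and c: "c \<in> R"
    and one: "m + c * coeff f i = 1" and n: "degree f < n" "i < n"
  shows "content_unit_in R (f + monom m n)"
proof -
  define a where "a j = (if j = i then c else if j = n then 1 else 0)" for j
  have "a j * coeff (f + monom m n) j =
      (if j = i then c * coeff f i else 0) + (if j = n then m else 0)" for j
    using n by (auto simp: a_def coeff_monom coeff_eq_0)
  then have "(\<Sum>j\<le>n. a j * coeff (f + monom m n) j) = m + c * coeff f i"
    using n by (simp add: sum.distrib add.commute)
  moreover have "poly_over R (f + monom m n)"
    using poly_over_add[OF _ f poly_over_monom] subring_of_imp_ideal_in[OF sr] m by blast
  moreover have "\<forall>j. a j \<in> R"
    using c subring_of_zero[OF sr] subring_of_one[OF sr] by (auto simp: a_def)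
  ultimately show ?thesis
    using content_unit_inI[OF sr] one by metis
qed

section \<open>The Nagata ring of a subring\<close>

lemma nagata_of_fracI: "poly_over R f \<Longrightarrow> content_unit_in R g \<Longrightarrow> nag_frac f g \<in> nagata_of R"
  unfolding nagata_of_def poly_over_def by blast

lemma nagata_ofE:
  assumes "x \<in> nagata_of R"
  obtains f g where "x = nag_frac f g" "poly_over R f" "content_unit_in R g"
  using assms unfolding nagata_of_def poly_over_def by blast

context
  fixes R :: "'a::comm_ring_1 set"
  assumes sr: "subring_of R"
begin

lemma nagata_of_add:
  assumes "x \<in> nagata_of R" "y \<in> nagata_of R"
  shows "x + y \<in> nagata_of R"
proof -
  obtain f g where x: "x = nag_frac f g" "poly_over R f" "content_unit_in R g"
    using assms(1) by (rule nagata_ofE)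
  obtain f' g' where y: "y = nag_frac f' g'" "poly_over R f'" "content_unit_in R g'"
    using assms(2) by (rule nagata_ofE)
  have "x + y = nag_frac (f * g' + f' * g) (g * g')"
    using x y by (simp add: nag_frac_add content_unit_in_nag_den)
  moreover have "poly_over R (f * g' + f' * g)"
    using x y by (intro poly_over_add[OF subring_of_imp_ideal_in[OF sr]] poly_over_mult_subring[OF sr])
      (auto intro: content_unit_in_poly_over)
  ultimately show ?thesis
    using x y content_unit_in_mult[OF sr] nagata_of_fracI by metis
qed

lemma nagata_of_mult:
  assumes "x \<in> nagata_of R" "y \<in> nagata_of R"
  shows "x * y \<in> nagata_of R"
proof -
  obtain f g where x: "x = nag_frac f g" "poly_over R f" "content_unit_in R g"
    using assms(1) by (rule nagata_ofE)
  obtain f' g' where y: "y = nag_frac f' g'" "poly_over R f'" "content_unit_in R g'"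
    using assms(2) by (rule nagata_ofE)
  have "x * y = nag_frac (f * f') (g * g')"
    using x y by (simp add: nag_frac_mult content_unit_in_nag_den)
  then show ?thesis
    using x y content_unit_in_mult[OF sr] poly_over_mult_subring[OF sr] nagata_of_fracI by metis
qed

lemma nag_of_in_nagata_of: "r \<in> R \<Longrightarrow> nag_of r \<in> nagata_of R"
  unfolding nag_of_def
  by (intro nagata_of_fracI poly_over_const[OF subring_of_imp_ideal_in[OF sr]] content_unit_in_one[OF sr])

lemma one_in_nagata_of: "1 \<in> nagata_of R"
  using nag_of_in_nagata_of[OF subring_of_one[OF sr]] by (simp add: nag_of_1)

lemma nagata_of_sum: "(\<And>x. x \<in> S \<Longrightarrow> f x \<in> nagata_of R) \<Longrightarrow> sum f S \<in> nagata_of R"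
  using nag_of_in_nagata_of[OF subring_of_zero[OF sr]]
  by (induction S rule: infinite_finite_induct) (auto simp: nag_of_0 nagata_of_add)

end

section \<open>Extended ideals\<close>

definition nagata_ext_ideal :: "'a::comm_ring_1 set \<Rightarrow> 'a set \<Rightarrow> 'a nagata set" where
  "nagata_ext_ideal R I = {nag_frac f g | f g. poly_over I f \<and> content_unit_in R g}"

lemma nag_frac_in_nagata_ext_ideal:
  "poly_over I f \<Longrightarrow> content_unit_in R g \<Longrightarrow> nag_frac f g \<in> nagata_ext_ideal R I"
  unfolding nagata_ext_ideal_def by blast

context
  fixes R I :: "'a::comm_ring_1 set"
  assumes sr: "subring_of R" and I: "ideal_in R I"
begin

lemma ideal_in_nagata_ext_ideal: "ideal_in (nagata_of R) (nagata_ext_ideal R I)"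
  unfolding ideal_in_def
proof (intro conjI ballI subsetI)
  fix x assume "x \<in> nagata_ext_ideal R I"
  then show "x \<in> nagata_of R"
    unfolding nagata_ext_ideal_def using nagata_of_fracI poly_over_mono[OF I] by blast
next
  show "0 \<in> nagata_ext_ideal R I"
    unfolding zero_nagata_eq_nag_frac
    using nag_frac_in_nagata_ext_ideal poly_over_const[OF I ideal_in_zero[OF I]] content_unit_in_one[OF sr]
    by fastforce
next
  fix x y assume "x \<in> nagata_ext_ideal R I" "y \<in> nagata_ext_ideal R I"
  then obtain f g f' g' where x: "x = nag_frac f g" "poly_over I f" "content_unit_in R g"
    and y: "y = nag_frac f' g'" "poly_over I f'" "content_unit_in R g'"
    unfolding nagata_ext_ideal_def by blast
  then show "x + y \<in> nagata_ext_ideal R I"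
    by (auto simp: nag_frac_add content_unit_in_nag_den content_unit_in_poly_over
        intro!: nag_frac_in_nagata_ext_ideal poly_over_add[OF I] poly_over_mult[OF I]
        content_unit_in_mult[OF sr])
next
  fix x assume "x \<in> nagata_ext_ideal R I"
  then obtain f g where x: "x = nag_frac f g" "poly_over I f" "content_unit_in R g"
    unfolding nagata_ext_ideal_def by blast
  then have "- x = nag_frac (- f) g" by (simp add: nag_frac_uminus content_unit_in_nag_den)
  then show "- x \<in> nagata_ext_ideal R I"
    using x poly_over_uminus[OF I] nag_frac_in_nagata_ext_ideal by metis
next
  fix a x assume "a \<in> nagata_of R" "x \<in> nagata_ext_ideal R I"
  then obtain f g f' g' where a: "a = nag_frac f g" "poly_over R f" "content_unit_in R g"
    and x: "x = nag_frac f' g'" "poly_over I f'" "content_unit_in R g'"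
    unfolding nagata_ext_ideal_def by (blast elim: nagata_ofE)
  then show "a * x \<in> nagata_ext_ideal R I"
    by (auto simp: nag_frac_mult content_unit_in_nag_den
        intro!: nag_frac_in_nagata_ext_ideal poly_over_mult_left[OF I] content_unit_in_mult[OF sr])
qed

lemma nag_of_image_subset_nagata_ext_ideal: "nag_of ` I \<subseteq> nagata_ext_ideal R I"
  unfolding nag_of_def
  using nag_frac_in_nagata_ext_ideal poly_over_const[OF I] content_unit_in_one[OF sr] by blast

lemma nagata_ext_ideal_subset:
  assumes J: "ideal_in (nagata_of R) J" and gen: "nag_of ` I \<subseteq> J"
  shows "nagata_ext_ideal R I \<subseteq> J"
proof
  fix x assume "x \<in> nagata_ext_ideal R I"
  then obtain f g where x: "x = nag_frac f g" "poly_over I f" and g: "content_unit_in R g"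
    unfolding nagata_ext_ideal_def by blast
  have gd: "g \<in> nag_den" using content_unit_in_nag_den[OF g] .
  have "poly_over I p \<longrightarrow> nag_frac p g \<in> J" for p
  proof (induction p rule: pCons_induct)
    case 0
    have "nag_frac 0 g = 0"
      unfolding zero_nagata_eq_nag_frac using nag_frac_eq_iff[OF gd nag_den.one] by simp
    then show ?case using ideal_in_zero[OF J] by simp
  next
    case (pCons a p)
    show ?case
    proof
      assume "poly_over I (pCons a p)"
      then have "a \<in> I" "poly_over I p"
        unfolding poly_over_def by (metis coeff_pCons_0, metis coeff_pCons_Suc)
      have "nag_frac (pCons a p) g = nag_frac 1 g * nag_of a + nag_frac [:0, 1:] 1 * nag_frac p g"
        by (rule nag_frac_pCons[OF gd])
      moreover have "nag_frac 1 g \<in> nagata_of R"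
        by (rule nagata_of_fracI[OF poly_over_one[OF sr] g])
      moreover have "poly_over R [:0, 1:]"
        using subring_of_zero[OF sr] subring_of_one[OF sr]
        by (simp add: poly_over_def coeff_pCons split: nat.split)
      then have "nag_frac [:0, 1:] 1 \<in> nagata_of R"
        by (rule nagata_of_fracI[OF _ content_unit_in_one[OF sr]])
      moreover have "nag_of a \<in> J" "nag_frac p g \<in> J"
        using gen \<open>a \<in> I\<close> pCons.IH \<open>poly_over I p\<close> by auto
      ultimately show "nag_frac (pCons a p) g \<in> J"
        using ideal_in_add[OF J] ideal_in_mult_left[OF J] by simp
    qed
  qed
  then show "x \<in> J" using x by blast
qed

lemma gen_ideal_in_nag_of_image: "gen_ideal_in (nagata_of R) (nag_of ` I) = nagata_ext_ideal R I"
  unfolding gen_ideal_in_def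
  using ideal_in_nagata_ext_ideal nag_of_image_subset_nagata_ext_ideal nagata_ext_ideal_subset by blast

lemma one_notin_nagata_ext_ideal:
  assumes "1 \<notin> I"
  shows "1 \<notin> nagata_ext_ideal R I"
proof
  assume "1 \<in> nagata_ext_ideal R I"
  then obtain f g where "1 = nag_frac f g" "poly_over I f" and g: "content_unit_in R g"
    unfolding nagata_ext_ideal_def by blast
  then have "poly_over I g"
    using nag_frac_eq_iff[OF nag_den.one content_unit_in_nag_den[OF g]]
    unfolding one_nagata_eq_nag_frac by simp
  then show False
    using content_unit_in_coeff_notin[OF I assms g] unfolding poly_over_def by blast
qed

end

context
  fixes R P :: "'a::comm_ring_1 set"
  assumes sr: "subring_of R" and P: "prime_ideal_in R P"
begin

lemma prime_ideal_in_nagata_ext_ideal: "prime_ideal_in (nagata_of R) (nagata_ext_ideal R P)"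
proof -
  note PI = prime_ideal_in_imp_ideal_in[OF P] and P1 = prime_ideal_in_one_notin[OF P]
  show ?thesis
    unfolding prime_ideal_in_def
  proof (intro conjI ballI impI)
    show "ideal_in (nagata_of R) (nagata_ext_ideal R P)"
      by (rule ideal_in_nagata_ext_ideal[OF sr PI])
    show "nagata_ext_ideal R P \<noteq> nagata_of R"
      using one_notin_nagata_ext_ideal[OF sr PI P1] one_in_nagata_of[OF sr] by blast
  next
    fix x y assume "x \<in> nagata_of R" "y \<in> nagata_of R" and xy: "x * y \<in> nagata_ext_ideal R P"
    then obtain f g f' g' where x: "x = nag_frac f g" "poly_over R f" "content_unit_in R g"
      and y: "y = nag_frac f' g'" "poly_over R f'" "content_unit_in R g'"
      by (metis nagata_ofE)
    obtain F G where FG: "x * y = nag_frac F G" "poly_over P F" "content_unit_in R G"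
      using xy unfolding nagata_ext_ideal_def by blast
    have gg': "content_unit_in R (g * g')" using content_unit_in_mult[OF sr x(3) y(3)] .
    have "nag_frac (f * f') (g * g') = nag_frac F G"
      using x y FG(1) by (simp add: nag_frac_mult content_unit_in_nag_den)
    then have eq: "f * f' * G = F * (g * g')"
      using nag_frac_eq_iff content_unit_in_nag_den gg' FG(3) by blast
    show "x \<in> nagata_ext_ideal R P \<or> y \<in> nagata_ext_ideal R P"
    proof (rule ccontr)
      assume "\<not> ?thesis"
      then have "\<exists>i. coeff f i \<notin> P" "\<exists>i. coeff f' i \<notin> P"
        using x y nag_frac_in_nagata_ext_ideal unfolding poly_over_def by blast+
      then have "\<exists>k. coeff (f * f') k \<notin> P"
        using prime_ideal_in_coeff_mult_notin[OF P x(2) y(2)] by blast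
      then have "\<exists>k. coeff (f * f' * G) k \<notin> P"
        using prime_ideal_in_coeff_mult_notin[OF P poly_over_mult_subring[OF sr x(2) y(2)]
            content_unit_in_poly_over[OF FG(3)]] content_unit_in_coeff_notin[OF PI P1 FG(3)]
        by blast
      moreover have "poly_over P (F * (g * g'))"
        using poly_over_mult[OF PI FG(2) content_unit_in_poly_over[OF gg']] .
      ultimately show False using eq unfolding poly_over_def by metis
    qed
  qed
qed

text \<open>A witness b for P in the support of S/R also witnesses P R(X): if b f/g lay in R(X),
  Gauss's lemma would give a coefficient of f G outside P whose product with b lies in R.\<close>
lemma nagata_ext_ideal_in_supp_ext:
  assumes b: "\<forall>s\<in>R - P. s * b \<notin> R"
  shows "nagata_ext_ideal R P \<in> supp_ext (nagata_of R)"
  unfolding supp_ext_def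
proof (intro CollectI conjI exI[of _ "nag_of b"] ballI notI)
  show "prime_ideal_in (nagata_of R) (nagata_ext_ideal R P)"
    by (rule prime_ideal_in_nagata_ext_ideal)
next
  fix x assume x: "x \<in> nagata_of R - nagata_ext_ideal R P" and xb: "x * nag_of b \<in> nagata_of R"
  obtain f g where fg: "x = nag_frac f g" "poly_over R f" "content_unit_in R g"
    using x by (blast elim: nagata_ofE)
  obtain F G where FG: "x * nag_of b = nag_frac F G" "poly_over R F" "content_unit_in R G"
    using xb by (rule nagata_ofE)
  have "nag_frac (smult b f) g = nag_frac F G"
    using fg(1) FG(1) content_unit_in_nag_den[OF fg(3)]
    by (simp add: nag_of_def nag_frac_mult nag_den.one)
  then have eq: "smult b (f * G) = F * g"
    using nag_frac_eq_iff content_unit_in_nag_den fg(3) FG(3) by fastforce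
  have "\<exists>i. coeff f i \<notin> P"
    using x fg nag_frac_in_nagata_ext_ideal unfolding poly_over_def by blast
  then obtain k where k: "coeff (f * G) k \<notin> P"
    using prime_ideal_in_coeff_mult_notin[OF P fg(2) content_unit_in_poly_over[OF FG(3)]]
      content_unit_in_coeff_notin[OF prime_ideal_in_imp_ideal_in[OF P]
        prime_ideal_in_one_notin[OF P] FG(3)]
    by blast
  have "coeff (f * G) k \<in> R"
    using poly_over_mult_subring[OF sr fg(2) content_unit_in_poly_over[OF FG(3)]]
    unfolding poly_over_def by blast
  moreover have "coeff (f * G) k * b \<in> R"
    using arg_cong[OF eq, of "\<lambda>p. coeff p k"]
      poly_over_mult_subring[OF sr FG(2) content_unit_in_poly_over[OF fg(3)]]
    unfolding poly_over_def by (simp add: mult.commute)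
  ultimately show False using b k by blast
qed

end

text \<open>If f/g is not in M R(X), some coefficient a of f is invertible modulo M, say m + c a = 1; then
  w = f + m X^n has content one for large n, so w/g is a unit of R(X) congruent to f/g modulo M R(X).\<close>
lemma nagata_ext_ideal_inverse_mod:
  assumes sr: "subring_of R" and M: "ideal_in R M"
    and maximal: "\<forall>r\<in>R - M. \<exists>m\<in>M. \<exists>c\<in>R. m + c * r = 1"
    and x: "x \<in> nagata_of R - nagata_ext_ideal R M"
  obtains y z where "y \<in> nagata_of R" "z \<in> nagata_ext_ideal R M" "y * x + z = 1"
proof -
  obtain f g where fg: "x = nag_frac f g" "poly_over R f" "content_unit_in R g"
    using x by (blast elim: nagata_ofE)
  obtain i where "coeff f i \<notin> M"
    using x fg nag_frac_in_nagata_ext_ideal unfolding poly_over_def by blast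
  then obtain m c where mc: "m \<in> M" "c \<in> R" "m + c * coeff f i = 1"
    using maximal fg(2) unfolding poly_over_def by blast
  define n where "n = Suc (max i (degree f))"
  define w where "w = f + monom m n"
  have w: "content_unit_in R w"
    unfolding w_def using ideal_in_subset[OF M] mc
    by (intro content_unit_in_add_monom[OF sr fg(2)]) (auto simp: n_def)
  have gd: "g \<in> nag_den" and wd: "w \<in> nag_den"
    using content_unit_in_nag_den fg(3) w by blast+
  define y where "y = nag_frac g w"
  have "y * x + y * nag_frac (monom m n) g = y * nag_frac w g"
    unfolding w_def fg(1) by (simp add: nag_frac_add_same[OF gd] flip: distrib_left)
  also have "\<dots> = nag_frac (g * w) (w * g)"
    unfolding y_def by (rule nag_frac_mult[OF wd gd])
  also have "\<dots> = 1"
    unfolding one_nagata_eq_nag_frac using nag_frac_eq_iff[OF nag_den_mult[OF wd gd] nag_den.one]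
    by (simp add: mult.commute)
  finally show thesis
  proof (rule that[rotated 2])
    show "y \<in> nagata_of R"
      unfolding y_def by (rule nagata_of_fracI[OF content_unit_in_poly_over[OF fg(3)] w])
    then show "y * nag_frac (monom m n) g \<in> nagata_ext_ideal R M"
      using ideal_in_mult_left[OF ideal_in_nagata_ext_ideal[OF sr M]]
        nag_frac_in_nagata_ext_ideal[OF poly_over_monom[OF M mc(1)] fg(3)] by blast
  qed
qed

lemma nagata_ext_ideal_maximal:
  assumes sr: "subring_of R" and M: "ideal_in R M"
    and maximal: "\<forall>r\<in>R - M. \<exists>m\<in>M. \<exists>c\<in>R. m + c * r = 1"
    and Q: "ideal_in (nagata_of R) Q" "1 \<notin> Q" and NQ: "nagata_ext_ideal R M \<subseteq> Q"
  shows "Q = nagata_ext_ideal R M"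
proof (rule ccontr)
  assume "Q \<noteq> nagata_ext_ideal R M"
  then obtain x where "x \<in> Q" "x \<notin> nagata_ext_ideal R M" using NQ by blast
  moreover have "x \<in> nagata_of R" using \<open>x \<in> Q\<close> ideal_in_subset[OF Q(1)] by blast
  ultimately obtain y z where yz: "y \<in> nagata_of R" "z \<in> nagata_ext_ideal R M" "y * x + z = 1"
    using nagata_ext_ideal_inverse_mod[OF sr M maximal, of x] by blast
  have "y * x + z \<in> Q"
    using ideal_in_add[OF Q(1) ideal_in_mult_left[OF Q(1) yz(1) \<open>x \<in> Q\<close>]] yz(2) NQ by blast
  with Q(2) yz(3) show False by simp
qed

section \<open>Contracted ideals\<close>

lemma prime_ideal_in_contraction:
  fixes R :: "'a::comm_ring_1 set"
  assumes sr: "subring_of R" and Q: "prime_ideal_in (nagata_of R) Q"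
  shows "prime_ideal_in R {r \<in> R. nag_of r \<in> Q}"
  unfolding prime_ideal_in_def
proof (intro conjI ballI impI)
  have QI: "ideal_in (nagata_of R) Q" by (rule prime_ideal_in_imp_ideal_in[OF Q])
  show "ideal_in R {r \<in> R. nag_of r \<in> Q}"
    unfolding ideal_in_def
    using subring_of_zero[OF sr] subring_of_add[OF sr] subring_of_uminus[OF sr] subring_of_mult[OF sr]
      ideal_in_zero[OF QI] ideal_in_add[OF QI] ideal_in_uminus[OF QI]
      ideal_in_mult_left[OF QI nag_of_in_nagata_of[OF sr]]
    by (simp add: nag_of_0 nag_of_add nag_of_uminus nag_of_mult)
  show "{r \<in> R. nag_of r \<in> Q} \<noteq> R"
  proof
    assume "{r \<in> R. nag_of r \<in> Q} = R"
    then have "nag_of 1 \<in> Q" using subring_of_one[OF sr] by blast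
    then show False using prime_ideal_in_one_notin[OF Q] by (simp add: nag_of_1)
  qed
next
  fix a b assume "a \<in> R" "b \<in> R" "a * b \<in> {r \<in> R. nag_of r \<in> Q}"
  then show "a \<in> {r \<in> R. nag_of r \<in> Q} \<or> b \<in> {r \<in> R. nag_of r \<in> Q}"
    using Q nag_of_in_nagata_of[OF sr] unfolding prime_ideal_in_def by (simp add: nag_of_mult)
qed

text \<open>Surjectivity of R(X) \<otimes> S \<rightarrow> S(X) writes \<xi> as a finite sum of products r s with r \<in> R(X);
  the product of the denominators of the finitely many s clears all of them.\<close>
lemma nagata_tensor_iso_clear_denominators:
  fixes R :: "'a::comm_ring_1 set"
  assumes sr: "subring_of R" and P: "prime_ideal_in R P" and iso: "nagata_tensor_iso R"
    and den: "\<forall>b. \<exists>s\<in>R - P. s * b \<in> R"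
  shows "\<exists>s\<in>R - P. nag_of s * \<xi> \<in> nagata_of R"
proof -
  from den have "\<forall>b. \<exists>s. s \<in> R - P \<and> s * b \<in> R" by blast
  then obtain t where "\<forall>b. t b \<in> R - P \<and> t b * b \<in> R" by (rule choice[THEN exE])
  then have t: "\<And>b. t b \<in> R - P" "\<And>b. t b * b \<in> R" by blast+
  obtain u where u: "u \<in> free_comb R" "tensor_eval u = \<xi>"
    using iso unfolding nagata_tensor_iso_def by blast
  define D where "D = {p. u p \<noteq> 0}"
  have D: "finite D" "\<And>p. p \<in> D \<Longrightarrow> fst p \<in> nagata_of R"
    using u(1) unfolding free_comb_def D_def by auto
  define c where "c p = of_int (u p) * snd p" for p
  define T where "T = (\<Prod>p\<in>D. t (c p))"
  have T: "T \<in> R - P"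
    unfolding T_def by (rule prime_ideal_in_prod_notin[OF sr P D(1) t(1)])
  have "T * c p \<in> R" if p: "p \<in> D" for p
  proof -
    have "T * c p = (\<Prod>q\<in>D - {p}. t (c q)) * (t (c p) * c p)"
      unfolding T_def prod.remove[OF D(1) p] by (simp add: ac_simps)
    moreover have "(\<Prod>q\<in>D - {p}. t (c q)) \<in> R"
      using t(1) by (intro subring_of_prod[OF sr]) blast
    ultimately show ?thesis using t(2) subring_of_mult[OF sr] by simp
  qed
  then have "(\<Sum>p\<in>D. fst p * nag_of (T * c p)) \<in> nagata_of R"
    using D(2) nagata_of_mult[OF sr] nag_of_in_nagata_of[OF sr] by (intro nagata_of_sum[OF sr]) blast
  moreover have "nag_of T * \<xi> = (\<Sum>p\<in>D. fst p * nag_of (T * c p))"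
    unfolding u(2)[symmetric] tensor_eval_def D_def[symmetric] c_def[symmetric]
    by (simp add: sum_distrib_left nag_of_mult ac_simps)
  ultimately show ?thesis using T by (intro bexI[of _ T]) simp_all
qed

lemma contraction_in_supp_ext:
  fixes R :: "'a::comm_ring_1 set"
  assumes sr: "subring_of R" and iso: "nagata_tensor_iso R" and Q: "Q \<in> supp_ext (nagata_of R)"
  shows "{r \<in> R. nag_of r \<in> Q} \<in> supp_ext R"
proof -
  let ?P = "{r \<in> R. nag_of r \<in> Q}"
  obtain \<xi> where \<xi>: "\<forall>s\<in>nagata_of R - Q. s * \<xi> \<notin> nagata_of R"
    using Q unfolding supp_ext_def by blast
  have P: "prime_ideal_in R ?P"
    using prime_ideal_in_contraction[OF sr] Q unfolding supp_ext_def by blast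
  have "\<exists>b. \<forall>s\<in>R - ?P. s * b \<notin> R"
  proof (rule ccontr)
    assume "\<not> ?thesis"
    then obtain s where "s \<in> R - ?P" "nag_of s * \<xi> \<in> nagata_of R"
      using nagata_tensor_iso_clear_denominators[OF sr P iso] by blast
    then show False using \<xi> nag_of_in_nagata_of[OF sr] by blast
  qed
  with P show ?thesis unfolding supp_ext_def by blast
qed

theorem lemma6p11:
  fixes R :: "'a::comm_ring_1 set" and M :: "'a set"
  assumes "subring_of R"
    and "crucial R M"
    and "nagata_tensor_iso R"
  shows "crucial (nagata_of R) (gen_ideal_in (nagata_of R) (nag_of ` M))"
proof -
  have "M \<in> supp_ext R" using assms(2) unfolding crucial_def by blast
  then have P: "prime_ideal_in R M" and b: "\<exists>b. \<forall>s\<in>R - M. s * b \<notin> R"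
    unfolding supp_ext_def by blast+
  note M = prime_ideal_in_imp_ideal_in[OF P]
  have "Q = nagata_ext_ideal R M" if Q: "Q \<in> supp_ext (nagata_of R)" for Q
  proof (rule nagata_ext_ideal_maximal[OF assms(1) M crucial_imp_maximal[OF assms(1,2)]])
    have "prime_ideal_in (nagata_of R) Q" using Q unfolding supp_ext_def by blast
    then show "ideal_in (nagata_of R) Q" "1 \<notin> Q"
      by (rule prime_ideal_in_imp_ideal_in, rule prime_ideal_in_one_notin)
    have "{r \<in> R. nag_of r \<in> Q} = M"
      using contraction_in_supp_ext[OF assms(1,3) Q] assms(2) unfolding crucial_def by blast
    then show "nagata_ext_ideal R M \<subseteq> Q"
      by (intro nagata_ext_ideal_subset[OF assms(1) M \<open>ideal_in (nagata_of R) Q\<close>]) blast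
  qed
  moreover have "nagata_ext_ideal R M \<in> supp_ext (nagata_of R)"
    using nagata_ext_ideal_in_supp_ext[OF assms(1) P] b by blast
  ultimately show ?thesis
    unfolding crucial_def gen_ideal_in_nag_of_image[OF assms(1) M] by blast
qed

end
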